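(* Let $V=\bigoplus_{n\in\mathbb{Z}}V_n$ be an $\mathcal{H}$-module vertex algebra such that $V_n=0$ for $n<0$ and $V_0=\mathbb{F}\mathbf{1}$, and let $J$ be the sum of all proper graded $V$-submodules of $V$ (the maximal proper graded $V$-submodule of $V$). Then $J$ is an ideal of $V$. If in addition $L_1^{(n)}V_n=0$ for all $n\ge1$, then $J$ is also an $\mathcal{H}$-submodule of $V$.
   Context: Throughout, $\mathbb{F}$ is an algebraically closed field of odd prime characteristic $p$; vertex algebras are over $\mathbb{F}$. Every vertex algebra $V$ is a module for the bialgebra $\mathcal{B}$ with basis $\{\mathcal{D}^{(n)}\}_{n\in\mathbb{N}}$, $\mathcal{D}^{(m)}\mathcal{D}^{(n)}=\binom{m+n}{n}\mathcal{D}^{(m+n)}$, via $\mathcal{D}^{(n)}v=v_{-n-1}\mathbf{1}$. $\mathcal{H}$: let $\mathfrak{sl}_2$ over $\mathbb{C}$ have basis $L_{-1},L_0,L_1$ with $[L_1,L_{-1}]=2L_0$, $[L_0,L_{\pm1}]=\mp L_{\pm1}$; put $L_{\pm1}^{(n)}=L_{\pm1}^n/n!$, $L_0^{(n)}=\binom{-2L_0}{n}$ in $U(\mathfrak{sl}_2)$; $U(\mathfrak{sl}_2)_{\mathbb{Z}}$ is the $\mathbb{Z}$-span of the $L_{-1}^{(i)}L_0^{(j)}L_1^{(k)}$, and $\mathcal{H}=\mathbb{F}\otimes_{\mathbb{Z}}U(\mathfrak{sl}_2)_{\mathbb{Z}}$. $e^{zL_{\pm1}}=\sum_{n\ge0}z^nL_{\pm1}^{(n)}$.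 For $v$ homogeneous of degree $n$, $f(z)^{\deg}v:=f(z)^nv$, extended linearly. A $\mathbb{Z}$-graded vertex algebra: $V=\bigoplus V_n$, $\mathbf{1}\in V_0$, $u_rV_n\subset V_{m+n-r-1}$ for $u\in V_m$; a graded $V$-submodule of $V$ is a subspace $U=\bigoplus(U\cap V_n)$ with $u_rU\subset U$ for all $u\in V$. A $\mathbb{Z}$-graded weight $\mathcal{H}$-module: $W=\bigoplus W_n$ with $\mathcal{H}$-action, $L_{\pm1}^{(r)}W_n\subset W_{n\mp r}$, $L_0^{(r)}|_{W_n}=\binom{-2n}{r}$. An $\mathcal{H}$-module vertex algebra: a $\mathbb{Z}$-graded vertex algebra $V$ which is a $\mathbb{Z}$-graded weight $\mathcal{H}$-module with $L_{-1}^{(n)}=\mathcal{D}^{(n)}$, such that $V_n=0$ for $n\ll0$, $L_1^{(n)}\mathbf{1}=\delta_{n,0}\mathbf{1}$, and $e^{zL_1}Y(v,z_0)e^{-zL_1}=Y\bigl(e^{z(1-zz_0)L_1}(1-zz_0)^{-2\deg}v,z_0/(1-zz_0)\bigr)$ for $v\in V$. *)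

theory Defs
  imports Main "HOL-Computational_Algebra.Polynomial"
begin

definition alg_closed_field :: "'a::field itself \<Rightarrow> bool" where
  "alg_closed_field _ \<longleftrightarrow> (\<forall>P :: 'a poly. degree P > 0 \<longrightarrow> (\<exists>x. poly P x = 0))"

definition ibinom :: "int \<Rightarrow> nat \<Rightarrow> int" where
  "ibinom m k = \<lfloor>(of_int m :: rat) gchoose k\<rfloor>"

text \<open>The vertex algebra is the whole type 'v, a vector space over 'a with scalar
  multiplication scale; Y u r v is the mode u_r v; vac is the vacuum.\<close>

definition vertex_algebra ::
  "('a::field \<Rightarrow> 'v::ab_group_add \<Rightarrow> 'v) \<Rightarrow> 'v \<Rightarrow> ('v \<Rightarrow> int \<Rightarrow> 'v \<Rightarrow> 'v) \<Rightarrow> bool" where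
  "vertex_algebra scale vac Y \<longleftrightarrow>
     vector_space scale
   \<and> (\<forall>u r. Vector_Spaces.linear scale scale (Y u r))
   \<and> (\<forall>v r. Vector_Spaces.linear scale scale (\<lambda>u. Y u r v))
   \<and> (\<forall>u v. \<exists>N. \<forall>r\<ge>N. Y u r v = 0)
   \<and> (\<forall>v r. Y vac r v = (if r = -1 then v else 0))
   \<and> (\<forall>u. Y u (-1) vac = u)
   \<and> (\<forall>u r. r \<ge> 0 \<longrightarrow> Y u r vac = 0)
   \<and> (\<forall>u v w m n r (N::nat).
        (\<forall>i\<ge>N. Y u (r + int i) v = 0 \<and> Y v (n + int i) w = 0 \<and> Y u (m + int i) w = 0) \<longrightarrow>
        (\<Sum>i<N. scale (of_int (ibinom m i)) (Y (Y u (r + int i) v) (m + n - int i) w))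
      = (\<Sum>i<N. scale (of_int ((-1)^i * ibinom r i))
            (Y u (m + r - int i) (Y v (n + int i) w)
             - scale (if even r then 1 else -1) (Y v (n + r - int i) (Y u (m + int i) w)))))"

definition direct_sum_grading :: "('a::field \<Rightarrow> 'v::ab_group_add \<Rightarrow> 'v) \<Rightarrow> (int \<Rightarrow> 'v set) \<Rightarrow> bool" where
  "direct_sum_grading scale Vn \<longleftrightarrow>
     (\<forall>n. module.subspace scale (Vn n))
   \<and> (\<forall>v. \<exists>!c :: int \<Rightarrow> 'v. (\<forall>n. c n \<in> Vn n) \<and> finite {n. c n \<noteq> 0} \<and> v = sum c {n. c n \<noteq> 0})"

definition graded_vertex_algebra ::
  "('a::field \<Rightarrow> 'v::ab_group_add \<Rightarrow> 'v) \<Rightarrow> 'v \<Rightarrow> ('v \<Rightarrow> int \<Rightarrow> 'v \<Rightarrow> 'v) \<Rightarrow> (int \<Rightarrow> 'v set) \<Rightarrow> bool" where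
  "graded_vertex_algebra scale vac Y Vn \<longleftrightarrow>
     vertex_algebra scale vac Y \<and> direct_sum_grading scale Vn \<and> vac \<in> Vn 0
   \<and> (\<forall>m n u v r. u \<in> Vn m \<longrightarrow> v \<in> Vn n \<longrightarrow> Y u r v \<in> Vn (m + n - r - 1))"

definition graded_subspace :: "('a::field \<Rightarrow> 'v::ab_group_add \<Rightarrow> 'v) \<Rightarrow> (int \<Rightarrow> 'v set) \<Rightarrow> 'v set \<Rightarrow> bool" where
  "graded_subspace scale Vn U \<longleftrightarrow> module.subspace scale U
   \<and> (\<forall>x\<in>U. \<exists>c :: int \<Rightarrow> 'v. (\<forall>n. c n \<in> U \<inter> Vn n) \<and> finite {n. c n \<noteq> 0} \<and> x = sum c {n. c n \<noteq> 0})"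

definition graded_V_submodule ::
  "('a::field \<Rightarrow> 'v::ab_group_add \<Rightarrow> 'v) \<Rightarrow> (int \<Rightarrow> 'v set) \<Rightarrow> ('v \<Rightarrow> int \<Rightarrow> 'v \<Rightarrow> 'v) \<Rightarrow> 'v set \<Rightarrow> bool" where
  "graded_V_submodule scale Vn Y U \<longleftrightarrow> graded_subspace scale Vn U \<and> (\<forall>u r x. x \<in> U \<longrightarrow> Y u r x \<in> U)"

definition Jmax ::
  "('a::field \<Rightarrow> 'v::ab_group_add \<Rightarrow> 'v) \<Rightarrow> (int \<Rightarrow> 'v set) \<Rightarrow> ('v \<Rightarrow> int \<Rightarrow> 'v \<Rightarrow> 'v) \<Rightarrow> 'v set" where
  "Jmax scale Vn Y = module.span scale (\<Union> {U. graded_V_submodule scale Vn Y U \<and> U \<noteq> UNIV})"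

definition VA_ideal :: "('a::field \<Rightarrow> 'v::ab_group_add \<Rightarrow> 'v) \<Rightarrow> ('v \<Rightarrow> int \<Rightarrow> 'v \<Rightarrow> 'v) \<Rightarrow> 'v set \<Rightarrow> bool" where
  "VA_ideal scale Y I \<longleftrightarrow> module.subspace scale I
   \<and> (\<forall>u r x. x \<in> I \<longrightarrow> Y u r x \<in> I \<and> Y x r u \<in> I)"

text \<open>Lm k, L0 k, Lp k are the actions of L_{-1}^{(k)}, L_0^{(k)}, L_1^{(k)}.
  H = F \<otimes> U(sl_2)_Z is given by generators and relations (with e = L_1, f = -L_{-1},
  h = -2L_0): divided-power relations and Kostant's commutation formula
  e^{(a)} f^{(b)} = \<Sum>_j f^{(b-j)} binom(h-a-b+2j, j) e^{(a-j)}; the relations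
  involving binom(h,\<cdot>) are automatic because L_0^{(r)} acts on Vn n by binom(-2n,r).\<close>
definition weight_H_module ::
  "('a::field \<Rightarrow> 'v::ab_group_add \<Rightarrow> 'v) \<Rightarrow> (int \<Rightarrow> 'v set)
   \<Rightarrow> (nat \<Rightarrow> 'v \<Rightarrow> 'v) \<Rightarrow> (nat \<Rightarrow> 'v \<Rightarrow> 'v) \<Rightarrow> (nat \<Rightarrow> 'v \<Rightarrow> 'v) \<Rightarrow> bool" where
  "weight_H_module scale Vn Lm L0 Lp \<longleftrightarrow>
     direct_sum_grading scale Vn
   \<and> (\<forall>k. Vector_Spaces.linear scale scale (Lm k) \<and> Vector_Spaces.linear scale scale (L0 k)
          \<and> Vector_Spaces.linear scale scale (Lp k))
   \<and> (\<forall>v. Lm 0 v = v \<and> Lp 0 v = v)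
   \<and> (\<forall>a b v. Lm a (Lm b v) = scale (of_nat ((a + b) choose a)) (Lm (a + b) v))
   \<and> (\<forall>a b v. Lp a (Lp b v) = scale (of_nat ((a + b) choose a)) (Lp (a + b) v))
   \<and> (\<forall>n r v. v \<in> Vn n \<longrightarrow>
        Lm r v \<in> Vn (n + int r) \<and> Lp r v \<in> Vn (n - int r)
        \<and> L0 r v = scale (of_int (ibinom (-2 * n) r)) v)
   \<and> (\<forall>a b n w. w \<in> Vn n \<longrightarrow>
        Lp a (Lm b w) = (\<Sum>j\<le>min a b. scale (of_int ((-1)^j * ibinom (int a - int b - 2 * n) j))
                                         (Lm (b - j) (Lp (a - j) w))))"

definition H_submodule ::
  "(nat \<Rightarrow> 'v \<Rightarrow> 'v) \<Rightarrow> (nat \<Rightarrow> 'v \<Rightarrow> 'v) \<Rightarrow> (nat \<Rightarrow> 'v \<Rightarrow> 'v) \<Rightarrow> 'v set \<Rightarrow> bool" where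
  "H_submodule Lm L0 Lp U \<longleftrightarrow> (\<forall>k x. x \<in> U \<longrightarrow> Lm k x \<in> U \<and> L0 k x \<in> U \<and> Lp k x \<in> U)"

text \<open>The conjugation axiom
  e^{zL_1} Y(v,z_0) e^{-zL_1} = Y(e^{z(1-zz_0)L_1}(1-zz_0)^{-2deg} v, z_0/(1-zz_0))
  written coefficientwise: for v \<in> V_n, the coefficient of z^N z_0^{-r-1} applied to w.\<close>
definition H_module_VA ::
  "('a::field \<Rightarrow> 'v::ab_group_add \<Rightarrow> 'v) \<Rightarrow> 'v \<Rightarrow> ('v \<Rightarrow> int \<Rightarrow> 'v \<Rightarrow> 'v) \<Rightarrow> (int \<Rightarrow> 'v set)
   \<Rightarrow> (nat \<Rightarrow> 'v \<Rightarrow> 'v) \<Rightarrow> (nat \<Rightarrow> 'v \<Rightarrow> 'v) \<Rightarrow> (nat \<Rightarrow> 'v \<Rightarrow> 'v) \<Rightarrow> bool" where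
  "H_module_VA scale vac Y Vn Lm L0 Lp \<longleftrightarrow>
     graded_vertex_algebra scale vac Y Vn
   \<and> weight_H_module scale Vn Lm L0 Lp
   \<and> (\<forall>k v. Lm k v = Y v (- int k - 1) vac)
   \<and> (\<exists>N. \<forall>n<N. Vn n = {0})
   \<and> (\<forall>k. Lp k vac = (if k = 0 then vac else 0))
   \<and> (\<forall>n v w r N. v \<in> Vn n \<longrightarrow>
        (\<Sum>b\<le>N. scale ((-1)^b) (Lp (N - b) (Y v r (Lp b w))))
      = (\<Sum>j\<le>N. scale (of_int ((-1)^j * ibinom (int N - 2 * n + r + 1) j)) (Y (Lp (N - j) v) (r + int j) w)))"

end

theory Submission
  imports Defs
begin

text \<open>To see that a linear map f preserves J it suffices to find, for every proper graded
  V-submodule U, a proper graded V-submodule containing f U. The candidate is the span of the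
  images of the homogeneous elements of U: it is graded, closed under all modes by a
  vertex-algebra identity, and proper as soon as it has no nonzero component of degree 0, because
  V_0 = F 1 and a proper submodule cannot contain 1. For the left modes f = (\<lambda>y. y_r u) closure
  comes from the commutator formula and properness from skew symmetry: a nonzero y_k w of degree 0
  would give a nonzero w_k y in U \<inter> V_0. For f = L_1^(k) closure comes from the conjugation
  axiom by induction on k, and properness from L_1^(n) V_n = 0.\<close>

lemma ibinom_zero_left: "ibinom 0 i = (if i = 0 then 1 else 0)"
  by (simp add: ibinom_def gbinomial_0_left)

lemma sum_over_support:
  "finite F \<Longrightarrow> {n. c n \<noteq> 0} \<subseteq> F \<Longrightarrow> sum c {n. (c n :: 'b::comm_monoid_add) \<noteq> 0} = sum c F"
  by (rule sum.mono_neutral_left) auto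

lemma (in vector_space) linear_image_span_subset:
  assumes "module_hom scale scale f" "subspace T" "\<And>s. s \<in> S \<Longrightarrow> f s \<in> T" "x \<in> span S"
  shows "f x \<in> T"
proof -
  have "span (f ` S) \<subseteq> T" using assms(2,3) by (intro span_minimal) auto
  then show ?thesis using module_hom.span_image[OF assms(1)] assms(4) by blast
qed

locale graded_vector_space = vector_space scale
  for scale :: "'a::field \<Rightarrow> 'v::ab_group_add \<Rightarrow> 'v" +
  fixes Vn :: "int \<Rightarrow> 'v set"
  assumes grading: "direct_sum_grading scale Vn"
begin

lemma subspace_Vn: "subspace (Vn n)"
  using grading unfolding direct_sum_grading_def by blast

lemma span_homogeneous_decomposition:
  assumes hom: "\<And>g. g \<in> G \<Longrightarrow> \<exists>d\<in>A. g \<in> Vn d" and "G \<subseteq> T" and T: "subspace T"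
    and "x \<in> span G"
  shows "\<exists>c. (\<forall>n. c n \<in> T \<inter> Vn n) \<and> (\<forall>n. n \<notin> A \<longrightarrow> c n = 0)
           \<and> finite {n. c n \<noteq> 0} \<and> x = sum c {n. c n \<noteq> 0}"
  using \<open>x \<in> span G\<close>
proof (induction rule: span_induct_alt)
  case base
  show ?case by (rule exI[of _ "\<lambda>_. 0"]) (simp add: subspace_0[OF T] subspace_0[OF subspace_Vn])
next
  case (step a g y)
  from step.IH obtain c where c: "\<forall>n. c n \<in> T \<inter> Vn n" "\<forall>n. n \<notin> A \<longrightarrow> c n = 0"
    "finite {n. c n \<noteq> 0}" "y = sum c {n. c n \<noteq> 0}" by blast
  from hom[OF step.hyps] obtain d where d: "d \<in> A" "g \<in> Vn d" by blast
  define c' where "c' n = c n + (if n = d then scale a g else 0)" for n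
  define F where "F = insert d {n. c n \<noteq> 0}"
  have F: "finite F" "{n. c n \<noteq> 0} \<subseteq> F" "{n. c' n \<noteq> 0} \<subseteq> F" "d \<in> F"
    using c(3) by (auto simp: F_def c'_def)
  have "\<forall>n. c' n \<in> T \<inter> Vn n"
    using c(1) d \<open>G \<subseteq> T\<close> step.hyps
    by (auto simp: c'_def intro!: subspace_add[OF T] subspace_add[OF subspace_Vn]
        subspace_scale[OF T] subspace_scale[OF subspace_Vn] subspace_0[OF T] subspace_0[OF subspace_Vn])
  moreover have "\<forall>n. n \<notin> A \<longrightarrow> c' n = 0" using c(2) d by (auto simp: c'_def)
  moreover have "finite {n. c' n \<noteq> 0}" using F finite_subset by blast
  moreover have "sum c' {n. c' n \<noteq> 0} = y + scale a g"
  proof -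
    have "sum c' {n. c' n \<noteq> 0} = sum c F + scale a g"
      unfolding sum_over_support[OF F(1,3)] using F by (simp add: c'_def sum.distrib)
    then show ?thesis using sum_over_support[OF F(1,2)] c(4) by simp
  qed
  ultimately show ?case by (metis add.commute)
qed

lemma homogeneous_notin_span:
  assumes v: "v \<in> Vn d" "v \<noteq> 0" and hom: "\<And>g. g \<in> G \<Longrightarrow> \<exists>e\<noteq>d. g \<in> Vn e"
  shows "v \<notin> span G"
proof
  assume "v \<in> span G"
  moreover have "\<And>g. g \<in> G \<Longrightarrow> \<exists>e\<in>-{d}. g \<in> Vn e" using hom by blast
  ultimately obtain c where c: "\<forall>n. c n \<in> UNIV \<inter> Vn n" "\<forall>n. n \<notin> -{d} \<longrightarrow> c n = 0"
    "finite {n. c n \<noteq> 0}" "v = sum c {n. c n \<noteq> 0}"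
    using span_homogeneous_decomposition[of G "-{d}" UNIV v] subspace_UNIV by blast
  define e where "e n = (if n = d then v else 0)" for n
  have "{n. e n \<noteq> 0} = {d}" using v(2) by (auto simp: e_def)
  then have "(\<forall>n. e n \<in> Vn n) \<and> finite {n. e n \<noteq> 0} \<and> v = sum e {n. e n \<noteq> 0}"
    using v(1) subspace_0[OF subspace_Vn] by (auto simp: e_def)
  moreover have "\<exists>!c. (\<forall>n. c n \<in> Vn n) \<and> finite {n. c n \<noteq> 0} \<and> v = sum c {n. c n \<noteq> 0}"
    using grading unfolding direct_sum_grading_def by blast
  ultimately have "c = e" using c by blast
  then show False using c(2) v(2) by (simp add: e_def)
qed

lemma graded_subspace_UNIV: "graded_subspace scale Vn UNIV"
proof -
  have "\<exists>c. (\<forall>n. c n \<in> Vn n) \<and> finite {n. c n \<noteq> 0} \<and> x = sum c {n. c n \<noteq> 0}" for x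
    using grading unfolding direct_sum_grading_def by blast
  then show ?thesis unfolding graded_subspace_def by (simp add: subspace_UNIV)
qed

lemma graded_subspace_subset_span_homogeneous:
  assumes "graded_subspace scale Vn U" "x \<in> U"
  shows "x \<in> span (\<Union>n. U \<inter> Vn n)"
proof -
  obtain c where c: "\<forall>n. c n \<in> U \<inter> Vn n" "x = sum c {n. c n \<noteq> 0}"
    using assms unfolding graded_subspace_def by blast
  show ?thesis unfolding c(2) using c(1) by (intro span_sum span_base) blast
qed

lemma graded_subspace_linear_image_subset:
  assumes U: "graded_subspace scale Vn U" and f: "module_hom scale scale f" and T: "subspace T"
    and hom: "\<And>n x. x \<in> U \<Longrightarrow> x \<in> Vn n \<Longrightarrow> f x \<in> T" and "x \<in> U"
  shows "f x \<in> T"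
  by (rule linear_image_span_subset[OF f T _ graded_subspace_subset_span_homogeneous[OF U \<open>x \<in> U\<close>]])
    (use hom in blast)

end

locale vertex_alg =
  fixes scale :: "'a::field \<Rightarrow> 'v::ab_group_add \<Rightarrow> 'v"
    and vac :: 'v and Y :: "'v \<Rightarrow> int \<Rightarrow> 'v \<Rightarrow> 'v"
  assumes va: "vertex_algebra scale vac Y"
begin

sublocale vector_space scale
  using va unfolding vertex_algebra_def by blast

lemma module_hom_mode: "module_hom scale scale (Y u r)"
  using va unfolding vertex_algebra_def module_hom_iff_linear by blast

lemma module_hom_mode_left: "module_hom scale scale (\<lambda>u. Y u r v)"
  using va unfolding vertex_algebra_def module_hom_iff_linear by blast

lemma mode_zero [simp]: "Y u r 0 = 0" "Y 0 r v = 0"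
  using module_hom.zero[OF module_hom_mode] module_hom.zero[OF module_hom_mode_left, of r v] by simp_all

lemma mode_truncation: "\<exists>N. \<forall>r\<ge>N. Y u r v = 0"
  using va unfolding vertex_algebra_def by blast

lemma mode_vacuum: "Y u (-1) vac = u" "r \<ge> 0 \<Longrightarrow> Y u r vac = 0"
  using va unfolding vertex_algebra_def by blast+

lemma borcherds_identity:
  "(\<forall>i\<ge>N. Y u (r + int i) v = 0 \<and> Y v (n + int i) w = 0 \<and> Y u (m + int i) w = 0) \<Longrightarrow>
     (\<Sum>i<N. scale (of_int (ibinom m i)) (Y (Y u (r + int i) v) (m + n - int i) w))
   = (\<Sum>i<N. scale (of_int ((-1)^i * ibinom r i))
        (Y u (m + r - int i) (Y v (n + int i) w)
         - scale (if even r then 1 else -1) (Y v (n + r - int i) (Y u (m + int i) w))))"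
  using va unfolding vertex_algebra_def by blast

lemma mode_swap_vanishing:
  assumes "\<And>i::nat. Y u (r + int i) v = 0"
  shows "Y v r u = 0"
proof -
  have "\<forall>i\<ge>1. Y u (r + int i) v = 0 \<and> Y v (0 + int i) vac = 0 \<and> Y u (-1 + int i) vac = 0"
    using assms mode_vacuum by auto
  from borcherds_identity[OF this]
  have "Y (Y u r v) (-1) vac = - scale (if even r then 1 else -1) (Y v r u)"
    using mode_vacuum[of 0] mode_vacuum(1)[of u] by (simp add: ibinom_def)
  then have "scale (if even r then 1 else -1) (Y v r u) = 0"
    using assms[of 0] by simp
  then show ?thesis by (cases "even r") auto
qed

lemma commutator_formula:
  "\<exists>N. Y a s (Y y k w)
      = Y y k (Y a s w) + (\<Sum>i<N. scale (of_int (ibinom s i)) (Y (Y a (int i) y) (s + k - int i) w))"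
proof -
  obtain N1 N2 N3 where N: "\<forall>r\<ge>N1. Y a r y = 0" "\<forall>r\<ge>N2. Y y r w = 0" "\<forall>r\<ge>N3. Y a r w = 0"
    using mode_truncation by metis
  define N where "N = Suc (nat (\<bar>N1\<bar> + \<bar>N2\<bar> + \<bar>N3\<bar> + \<bar>k\<bar> + \<bar>s\<bar>))"
  have trunc: "\<forall>i\<ge>N. Y a (0 + int i) y = 0 \<and> Y y (k + int i) w = 0 \<and> Y a (s + int i) w = 0"
    using N unfolding N_def by (auto simp del: of_nat_Suc)
  have "(\<Sum>i<N. scale (of_int (ibinom s i)) (Y (Y a (0 + int i) y) (s + k - int i) w))
      = (\<Sum>i<N. if i = 0 then Y a s (Y y k w) - Y y k (Y a s w) else 0)"
    unfolding borcherds_identity[OF trunc] by (rule sum.cong) (auto simp: ibinom_zero_left)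
  also have "\<dots> = Y a s (Y y k w) - Y y k (Y a s w)"
    using N_def by simp
  finally show ?thesis by (intro exI[of _ N]) (simp add: algebra_simps)
qed

end

locale graded_vertex_alg =
  fixes scale :: "'a::field \<Rightarrow> 'v::ab_group_add \<Rightarrow> 'v"
    and vac :: 'v and Y :: "'v \<Rightarrow> int \<Rightarrow> 'v \<Rightarrow> 'v" and Vn :: "int \<Rightarrow> 'v set"
  assumes graded: "graded_vertex_algebra scale vac Y Vn"
begin

sublocale vertex_alg scale vac Y
  using graded unfolding graded_vertex_algebra_def by unfold_locales blast

sublocale graded_vector_space scale Vn
  using graded unfolding graded_vertex_algebra_def by unfold_locales blast

lemma vac_Vn0: "vac \<in> Vn 0"
  using graded unfolding graded_vertex_algebra_def by blast

lemma mode_degree: "u \<in> Vn m \<Longrightarrow> v \<in> Vn n \<Longrightarrow> Y u r v \<in> Vn (m + n - r - 1)"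
  using graded unfolding graded_vertex_algebra_def by blast

definition proper_graded_submodule :: "'v set \<Rightarrow> bool" where
  "proper_graded_submodule U \<longleftrightarrow> graded_V_submodule scale Vn Y U \<and> U \<noteq> UNIV"

lemma proper_graded_submoduleD:
  assumes "proper_graded_submodule U"
  shows "graded_subspace scale Vn U" "subspace U" "x \<in> U \<Longrightarrow> Y u r x \<in> U" "vac \<notin> U"
proof -
  show "graded_subspace scale Vn U" "subspace U" "x \<in> U \<Longrightarrow> Y u r x \<in> U" for x u r
    using assms unfolding proper_graded_submodule_def graded_V_submodule_def graded_subspace_def
    by blast+
  show "vac \<notin> U"
  proof
    assume "vac \<in> U"
    then have "Y u (-1) vac \<in> U" for u
      using assms unfolding proper_graded_submodule_def graded_V_submodule_def by blast
    then show False using assms mode_vacuum(1) unfolding proper_graded_submodule_def by auto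
  qed
qed

lemma proper_graded_submodule_span:
  assumes "vac \<noteq> 0"
    and hom: "\<And>g. g \<in> G \<Longrightarrow> \<exists>d. g \<in> Vn d \<and> (d = 0 \<longrightarrow> g = 0)"
    and closed: "\<And>u r g. g \<in> G \<Longrightarrow> Y u r g \<in> span G"
  shows "proper_graded_submodule (span G)"
  unfolding proper_graded_submodule_def graded_V_submodule_def graded_subspace_def
proof (intro conjI ballI allI impI)
  show "subspace (span G)" by simp
  show "Y u r x \<in> span G" if "x \<in> span G" for u r x
    by (rule linear_image_span_subset[OF module_hom_mode subspace_span closed that])
  show "\<exists>c. (\<forall>n. c n \<in> span G \<inter> Vn n) \<and> finite {n. c n \<noteq> 0} \<and> x = sum c {n. c n \<noteq> 0}"
    if "x \<in> span G" for x
    using span_homogeneous_decomposition[of G UNIV "span G" x] that hom span_superset by blast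
  have "\<exists>e\<noteq>0. g \<in> Vn e" if "g \<in> G" for g
    using hom[OF that] subspace_0[OF subspace_Vn, of 1] by (metis zero_neq_one)
  then have "vac \<notin> span G" by (intro homogeneous_notin_span[OF vac_Vn0 \<open>vac \<noteq> 0\<close>])
  then show "span G \<noteq> UNIV" by blast
qed

lemma Jmax_eq: "Jmax scale Vn Y = span (\<Union>{U. proper_graded_submodule U})"
  unfolding Jmax_def proper_graded_submodule_def ..

lemma subspace_Jmax: "subspace (Jmax scale Vn Y)"
  unfolding Jmax_eq by simp

lemma proper_graded_submodule_subset_Jmax:
  "proper_graded_submodule U \<Longrightarrow> U \<subseteq> Jmax scale Vn Y"
  unfolding Jmax_eq by (auto intro: span_base)

lemma Jmax_closed:
  assumes "module_hom scale scale f"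
    and "\<And>U x. proper_graded_submodule U \<Longrightarrow> x \<in> U \<Longrightarrow> f x \<in> Jmax scale Vn Y"
    and "x \<in> Jmax scale Vn Y"
  shows "f x \<in> Jmax scale Vn Y"
  using linear_image_span_subset[OF assms(1) subspace_Jmax _ assms(3)[unfolded Jmax_eq]] assms(2)
  by blast

end

locale cft_type_vertex_alg = graded_vertex_alg +
  assumes Vn_neg: "\<And>n. n < 0 \<Longrightarrow> Vn n = {0}"
    and Vn_0: "Vn 0 = range (\<lambda>c. scale c vac)"
begin

lemma proper_graded_submodule_degree0:
  assumes U: "proper_graded_submodule U" and "x \<in> U" "x \<in> Vn 0"
  shows "x = 0"
proof (rule ccontr)
  assume "x \<noteq> 0"
  obtain c where x: "x = scale c vac" using Vn_0 \<open>x \<in> Vn 0\<close> by auto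
  with \<open>x \<noteq> 0\<close> have "vac = scale (inverse c) x" by auto
  then have "vac \<in> U" using subspace_scale[OF proper_graded_submoduleD(2)[OF U] \<open>x \<in> U\<close>] by simp
  then show False using proper_graded_submoduleD(4)[OF U] by blast
qed

lemma proper_graded_submodule_vac_nonzero:
  "proper_graded_submodule U \<Longrightarrow> vac \<noteq> 0"
  using proper_graded_submoduleD(2,4) subspace_0 by metis

definition left_mode_generators where
  "left_mode_generators U = {Y y k w | y k w. \<exists>m n. y \<in> U \<inter> Vn m \<and> w \<in> Vn n}"

context
  fixes U assumes U: "proper_graded_submodule U"
begin

lemma left_mode_generators_homogeneous:
  assumes "g \<in> left_mode_generators U"
  shows "\<exists>d. g \<in> Vn d \<and> (d = 0 \<longrightarrow> g = 0)"
proof -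
  obtain y k w m n where g: "g = Y y k w" "y \<in> U" "y \<in> Vn m" "w \<in> Vn n"
    using assms unfolding left_mode_generators_def by blast
  have "g = 0" if "m + n - k - 1 = 0"
  proof -
    have "Y w (k + int i) y = 0" for i :: nat
    proof -
      have "Y w (k + int i) y \<in> Vn (- int i)"
        using mode_degree[OF g(4,3), of "k + int i"] that by (simp add: algebra_simps)
      then show ?thesis
        using proper_graded_submodule_degree0[OF U proper_graded_submoduleD(3)[OF U g(2)]]
          Vn_neg[of "- int i"]
        by (cases "i = 0") auto
    qed
    then show ?thesis unfolding g(1) by (rule mode_swap_vanishing)
  qed
  then show ?thesis using mode_degree[OF g(3,4)] g(1) by (intro exI[of _ "m + n - k - 1"]) simp
qed

lemma left_mode_in_span_generators:
  assumes "y \<in> U"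
  shows "Y y k w \<in> span (left_mode_generators U)"
proof (rule graded_subspace_linear_image_subset[OF graded_subspace_UNIV module_hom_mode subspace_span])
  fix n w' assume "w' \<in> Vn n"
  show "Y y k w' \<in> span (left_mode_generators U)"
  proof (rule graded_subspace_linear_image_subset[OF proper_graded_submoduleD(1)[OF U]
        module_hom_mode_left subspace_span _ assms])
    fix m y' assume "y' \<in> U" "y' \<in> Vn m"
    then show "Y y' k w' \<in> span (left_mode_generators U)"
      using \<open>w' \<in> Vn n\<close> unfolding left_mode_generators_def by (intro span_base) blast
  qed
qed simp

lemma left_mode_generators_closed:
  assumes "g \<in> left_mode_generators U"
  shows "Y a s g \<in> span (left_mode_generators U)"
proof -
  obtain y k w where g: "g = Y y k w" "y \<in> U"
    using assms unfolding left_mode_generators_def by blast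
  obtain N where "Y a s (Y y k w)
      = Y y k (Y a s w) + (\<Sum>i<N. scale (of_int (ibinom s i)) (Y (Y a (int i) y) (s + k - int i) w))"
    using commutator_formula by blast
  then show ?thesis unfolding g(1)
    using g(2) proper_graded_submoduleD(3)[OF U]
    by (simp add: span_add span_sum span_scale left_mode_in_span_generators)
qed

lemma left_mode_in_Jmax: "y \<in> U \<Longrightarrow> Y y r u \<in> Jmax scale Vn Y"
  using left_mode_in_span_generators proper_graded_submodule_subset_Jmax
    proper_graded_submodule_span[OF proper_graded_submodule_vac_nonzero[OF U]
      left_mode_generators_homogeneous left_mode_generators_closed]
  by blast

end

theorem Jmax_ideal: "VA_ideal scale Y (Jmax scale Vn Y)"
  unfolding VA_ideal_def
proof (intro conjI allI impI subspace_Jmax)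
  fix u r x assume x: "x \<in> Jmax scale Vn Y"
  show "Y u r x \<in> Jmax scale Vn Y"
    by (rule Jmax_closed[OF module_hom_mode _ x])
      (meson proper_graded_submoduleD(3) proper_graded_submodule_subset_Jmax subsetD)
  show "Y x r u \<in> Jmax scale Vn Y"
    by (rule Jmax_closed[OF module_hom_mode_left left_mode_in_Jmax x])
qed

end

locale H_module_cft_vertex_alg = cft_type_vertex_alg +
  fixes Lm L0 Lp
  assumes H_module: "H_module_VA scale vac Y Vn Lm L0 Lp"
begin

lemma weight_H: "weight_H_module scale Vn Lm L0 Lp"
  using H_module unfolding H_module_VA_def by blast

lemma module_hom_L0: "module_hom scale scale (L0 k)"
  using weight_H unfolding weight_H_module_def module_hom_iff_linear by blast

lemma module_hom_Lp: "module_hom scale scale (Lp k)"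
  using weight_H unfolding weight_H_module_def module_hom_iff_linear by blast

lemma Lp_0: "Lp 0 v = v"
  using weight_H unfolding weight_H_module_def by blast

lemma Lp_Lp: "Lp a (Lp b v) = scale (of_nat ((a + b) choose a)) (Lp (a + b) v)"
  using weight_H unfolding weight_H_module_def by blast

lemma Lp_degree: "v \<in> Vn n \<Longrightarrow> Lp r v \<in> Vn (n - int r)"
  using weight_H unfolding weight_H_module_def by blast

lemma L0_action: "v \<in> Vn n \<Longrightarrow> L0 r v = scale (of_int (ibinom (-2 * n) r)) v"
  using weight_H unfolding weight_H_module_def by blast

lemma Lm_mode: "Lm k v = Y v (- int k - 1) vac"
  using H_module unfolding H_module_VA_def by blast

lemma conjugation_formula:
  "v \<in> Vn n \<Longrightarrow>
     (\<Sum>b\<le>N. scale ((-1)^b) (Lp (N - b) (Y v r (Lp b w))))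
   = (\<Sum>j\<le>N. scale (of_int ((-1)^j * ibinom (int N - 2 * n + r + 1) j)) (Y (Lp (N - j) v) (r + int j) w))"
  using H_module unfolding H_module_VA_def by blast

lemma L0_in_proper_graded_submodule:
  assumes U: "proper_graded_submodule U" and "x \<in> U"
  shows "L0 k x \<in> U"
  by (rule graded_subspace_linear_image_subset[OF proper_graded_submoduleD(1)[OF U]
        module_hom_L0 proper_graded_submoduleD(2)[OF U] _ \<open>x \<in> U\<close>])
    (simp add: L0_action subspace_scale[OF proper_graded_submoduleD(2)[OF U]])

definition Lp_generators where
  "Lp_generators U = {Lp k x | k x. \<exists>n. x \<in> U \<inter> Vn n}"

context
  fixes U assumes U: "proper_graded_submodule U"
begin

lemma Lp_generators_homogeneous:
  assumes Lp_top: "\<forall>n::nat\<ge>1. \<forall>v\<in>Vn (int n). Lp n v = 0" and "g \<in> Lp_generators U"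
  shows "\<exists>d. g \<in> Vn d \<and> (d = 0 \<longrightarrow> g = 0)"
proof -
  obtain k x n where g: "g = Lp k x" "x \<in> U" "x \<in> Vn n"
    using assms unfolding Lp_generators_def by blast
  have "g = 0" if "n - int k = 0"
  proof (cases "k = 0")
    case True
    then show ?thesis using g that proper_graded_submodule_degree0[OF U] Lp_0 by auto
  next
    case False
    then show ?thesis using g that Lp_top by auto
  qed
  then show ?thesis using Lp_degree[OF g(3)] g(1) by (intro exI[of _ "n - int k"]) simp
qed

lemma proper_graded_submodule_subset_span_Lp_generators:
  assumes "x \<in> U"
  shows "x \<in> span (Lp_generators U)"
proof -
  have "z \<in> Lp_generators U" if "z \<in> U" "z \<in> Vn n" for z n
    unfolding Lp_generators_def using that Lp_0[of z, symmetric] by blast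
  then have "(\<Union>n. U \<inter> Vn n) \<subseteq> Lp_generators U" by blast
  then show ?thesis
    using graded_subspace_subset_span_homogeneous[OF proper_graded_submoduleD(1)[OF U] assms]
      span_mono by blast
qed

lemma Lp_in_span_Lp_generators:
  "z \<in> span (Lp_generators U) \<Longrightarrow> Lp a z \<in> span (Lp_generators U)"
proof (rule linear_image_span_subset[OF module_hom_Lp subspace_span])
  fix g assume "g \<in> Lp_generators U"
  then obtain k x n where g: "g = Lp k x" "x \<in> U" "x \<in> Vn n"
    unfolding Lp_generators_def by blast
  then have "Lp (a + k) x \<in> Lp_generators U" unfolding Lp_generators_def by blast
  then show "Lp a g \<in> span (Lp_generators U)"
    unfolding g(1) Lp_Lp by (intro span_scale span_base)
qed

text \<open>In the conjugation formula with w \<in> U, the right side lies in U, and every term on the left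
  except the one with b = N lies in the span by induction; hence so does that last term.\<close>

lemma mode_Lp_in_span_Lp_generators:
  assumes "v \<in> Vn n" "x \<in> U"
  shows "Y v r (Lp k x) \<in> span (Lp_generators U)"
proof (induction k arbitrary: r rule: less_induct)
  case (less k)
  define T where "T b = scale ((-1::'a)^b) (Lp (k - b) (Y v r (Lp b x)))" for b
  have "sum T {..k} \<in> span (Lp_generators U)"
    unfolding T_def conjugation_formula[OF assms(1)]
    using assms(2) proper_graded_submoduleD(3)[OF U]
    by (intro span_sum span_scale proper_graded_submodule_subset_span_Lp_generators)
  moreover have "sum T {..<k} \<in> span (Lp_generators U)"
    unfolding T_def using less.IH by (intro span_sum span_scale Lp_in_span_Lp_generators) auto
  moreover have "sum T {..k} = sum T {..<k} + T k"
    by (simp add: lessThan_Suc_atMost[symmetric])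
  ultimately have "T k \<in> span (Lp_generators U)"
    by (metis add_diff_cancel_left' span_diff)
  moreover have "scale ((-1)^k) (T k) = Y v r (Lp k x)"
    unfolding T_def by (simp add: Lp_0 power_mult_distrib[symmetric])
  ultimately show ?case by (metis span_scale)
qed

lemma Lp_generators_closed:
  assumes "g \<in> Lp_generators U"
  shows "Y u r g \<in> span (Lp_generators U)"
proof -
  obtain k x where g: "g = Lp k x" "x \<in> U"
    using assms unfolding Lp_generators_def by blast
  show ?thesis unfolding g(1)
    by (rule graded_subspace_linear_image_subset[OF graded_subspace_UNIV module_hom_mode_left
          subspace_span mode_Lp_in_span_Lp_generators[OF _ g(2)]]) simp_all
qed

lemma Lp_in_Jmax:
  assumes "\<forall>n::nat\<ge>1. \<forall>v\<in>Vn (int n). Lp n v = 0" and "x \<in> U"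
  shows "Lp k x \<in> Jmax scale Vn Y"
  using proper_graded_submodule_subset_span_Lp_generators[OF \<open>x \<in> U\<close>] Lp_in_span_Lp_generators
    proper_graded_submodule_subset_Jmax
    proper_graded_submodule_span[OF proper_graded_submodule_vac_nonzero[OF U]
      Lp_generators_homogeneous[OF assms(1)] Lp_generators_closed]
  by blast

end

theorem Jmax_H_submodule:
  assumes "\<forall>n::nat\<ge>1. \<forall>v\<in>Vn (int n). Lp n v = 0"
  shows "H_submodule Lm L0 Lp (Jmax scale Vn Y)"
  unfolding H_submodule_def
proof (intro allI impI conjI)
  fix k x assume x: "x \<in> Jmax scale Vn Y"
  show "Lm k x \<in> Jmax scale Vn Y"
    unfolding Lm_mode using Jmax_ideal x unfolding VA_ideal_def by blast
  show "L0 k x \<in> Jmax scale Vn Y"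
    by (rule Jmax_closed[OF module_hom_L0 _ x])
      (meson L0_in_proper_graded_submodule proper_graded_submodule_subset_Jmax subsetD)
  show "Lp k x \<in> Jmax scale Vn Y"
    by (rule Jmax_closed[OF module_hom_Lp Lp_in_Jmax[OF _ assms] x])
qed

end

theorem lemma4p12:
  fixes scale :: "'a::field \<Rightarrow> 'v::ab_group_add \<Rightarrow> 'v"
    and vac :: 'v and Y :: "'v \<Rightarrow> int \<Rightarrow> 'v \<Rightarrow> 'v" and Vn :: "int \<Rightarrow> 'v set"
    and Lm L0 Lp :: "nat \<Rightarrow> 'v \<Rightarrow> 'v" and p :: nat
  assumes "alg_closed_field TYPE('a)"
    and "prime p" and "odd p" and "CHAR('a) = p"
    and "H_module_VA scale vac Y Vn Lm L0 Lp"
    and "\<forall>n<0. Vn n = {0}"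
    and "Vn 0 = range (\<lambda>c. scale c vac)"
  shows "VA_ideal scale Y (Jmax scale Vn Y)
    \<and> ((\<forall>n::nat\<ge>1. \<forall>v\<in>Vn (int n). Lp n v = 0) \<longrightarrow> H_submodule Lm L0 Lp (Jmax scale Vn Y))"
proof -
  interpret H_module_cft_vertex_alg scale vac Y Vn Lm L0 Lp
    using assms(5-7) by unfold_locales (auto simp: H_module_VA_def)
  show ?thesis using Jmax_ideal Jmax_H_submodule by blast
qed

end
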